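(* Let $X$ be a complex torus of dimension $g$ with period matrix $(\tau\ \ I_g)$, $\tau=(\tau_{ij})\in M_g(\mathbb{C})$, $\det(\operatorname{Im}\tau)\ne0$, and let $\mathfrak{d}=[\mathbb{Q}(\{\tau_{ij}\}):\mathbb{Q}]$. If $\rho(X)<g$ (in particular if $\rho(X)=0$), then $\mathfrak{d}\ge5$.
   Context: A period matrix $(\tau\ \ I_g)$ means $X=\mathbb{C}^g/\Lambda$ with $\Lambda$ the lattice generated by the $2g$ columns. The Picard number $\rho(X)$ is the rank of the Néron–Severi group $\mathrm{NS}(X)$. *)

theory Defs
  imports "HOL-Analysis.Analysis" "HOL-Library.Extended_Nat"
begin

definition is_subfield :: "complex set \<Rightarrow> bool" where
  "is_subfield F \<longleftrightarrow> 0 \<in> F \<and> 1 \<in> F \<and>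
     (\<forall>x\<in>F. \<forall>y\<in>F. x + y \<in> F \<and> x - y \<in> F \<and> x * y \<in> F) \<and>
     (\<forall>x\<in>F. x \<noteq> 0 \<longrightarrow> inverse x \<in> F)"

definition gen_field :: "complex set \<Rightarrow> complex set" where
  "gen_field S = \<Inter>{F. is_subfield F \<and> S \<subseteq> F}"

definition Q_indep :: "complex set \<Rightarrow> bool" where
  "Q_indep S \<longleftrightarrow> finite S \<and>
     (\<forall>c :: complex \<Rightarrow> rat. (\<Sum>x\<in>S. of_rat (c x) * x) = 0 \<longrightarrow> (\<forall>x\<in>S. c x = 0))"

definition field_degree :: "complex set \<Rightarrow> enat" where
  "field_degree F = Sup {enat (card S) | S. S \<subseteq> F \<and> Q_indep S}"

text \<open>The lattice Lambda spanned by the 2g columns of the period matrix (tau  I_g).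
  Columns are indexed by 'g + 'g: Inl j is column j of tau, Inr j is the j-th unit vector.\<close>
definition lattice_vec :: "complex^'g^'g \<Rightarrow> ('g + 'g) \<Rightarrow> complex^'g" where
  "lattice_vec \<tau> a = (case a of Inl j \<Rightarrow> (\<chi> i. \<tau>$i$j) | Inr j \<Rightarrow> (\<chi> i. if i = j then 1 else 0))"

definition real_bilinear :: "('v::real_vector \<Rightarrow> 'v \<Rightarrow> real) \<Rightarrow> bool" where
  "real_bilinear B \<longleftrightarrow> (\<forall>w. linear (\<lambda>v. B v w)) \<and> (\<forall>v. linear (\<lambda>w. B v w))"

text \<open>Neron--Severi group of X = C^g / Lambda: integer alternating forms E on Lambda
  (Gram matrix w.r.t. the lattice basis) whose real-bilinear extension to C^g satisfies
  E(iv, iw) = E(v, w) (Appell--Humbert / Lefschetz (1,1)).\<close>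
definition NS :: "complex^'g^'g \<Rightarrow> (('g + 'g) \<Rightarrow> ('g + 'g) \<Rightarrow> int) set" where
  "NS \<tau> = {E. (\<forall>a. E a a = 0) \<and> (\<forall>a b. E a b = - E b a) \<and>
     (\<exists>B :: complex^'g \<Rightarrow> complex^'g \<Rightarrow> real. real_bilinear B \<and>
        (\<forall>a b. B (lattice_vec \<tau> a) (lattice_vec \<tau> b) = of_int (E a b)) \<and>
        (\<forall>v w. B (\<chi> k. \<i> * v$k) (\<chi> k. \<i> * w$k) = B v w))}"

definition Z_indep :: "('a \<Rightarrow> 'a \<Rightarrow> int) set \<Rightarrow> bool" where
  "Z_indep S \<longleftrightarrow> finite S \<and>
     (\<forall>c :: ('a \<Rightarrow> 'a \<Rightarrow> int) \<Rightarrow> int. (\<forall>a b. (\<Sum>E\<in>S. c E * E a b) = 0) \<longrightarrow> (\<forall>E\<in>S. c E = 0))"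

definition picard_number :: "complex^'g^'g \<Rightarrow> enat" where
  "picard_number \<tau> = Sup {enat (card S) | S. S \<subseteq> NS \<tau> \<and> Z_indep S}"

end

theory Submission
  imports Defs
begin

text \<open>
  Let \<open>w\<^sub>k = (e\<^sub>k, -\<tau> e\<^sub>k)\<close> (\<open>k = 1..g\<close>) be the vectors of \<open>\<complex>\<^sup>2\<^sup>g\<close> spanning the kernel of the
  complex-linear map sending the standard basis to the lattice generators. An alternating
  integral form on \<open>\<Lambda>\<close> whose complexification vanishes on all pairs \<open>(w\<^sub>k, w\<^sub>l)\<close> extends
  to a real bilinear form on \<open>\<complex>\<^sup>g\<close> invariant under multiplication by \<open>\<i>\<close>, so it lies in \<open>NS(X)\<close>. If \<open>[\<rat>(\<tau>):\<rat>] \<le> 4\<close>, every product of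
  entries of the \<open>w\<^sub>k\<close> lies in a \<open>\<rat>\<close>-span of four numbers, so the conditions for \<open>k < l\<close> amount
  to at most \<open>4 \<cdot> g(g-1)/2\<close> rational linear equations on the \<open>g(2g-1)\<close>-dimensional space of
  alternating forms (the pairs \<open>k \<ge> l\<close> follow by antisymmetry). The solutions therefore form a
  space of dimension at least \<open>g(2g-1) - 2g(g-1) = g\<close>; clearing denominators in a basis gives
  \<open>g\<close> independent classes in \<open>NS(X)\<close>, so \<open>\<rho>(X) \<ge> g\<close>.
\<close>

section \<open>Degrees of subfields of \<open>\<complex>\<close>\<close>

lemma gen_field_subset: "S \<subseteq> gen_field S"
  unfolding gen_field_def by auto

lemma is_subfield_gen_field: "is_subfield (gen_field S)"
  unfolding is_subfield_def gen_field_def by auto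

lemma is_subfield_mult: "is_subfield F \<Longrightarrow> x \<in> F \<Longrightarrow> y \<in> F \<Longrightarrow> x * y \<in> F"
  unfolding is_subfield_def by blast

lemma Q_span_of_maximal_Q_indep:
  assumes indep: "Q_indep S" and max: "z \<notin> S \<Longrightarrow> \<not> Q_indep (insert z S)"
  shows "\<exists>c. z = (\<Sum>x\<in>S. of_rat (c x) * x)"
proof (cases "z \<in> S")
  case True
  have "(\<Sum>x\<in>S. of_rat (if x = z then 1 else 0) * x) = z"
    using indep True unfolding Q_indep_def by (simp add: if_distrib[of "\<lambda>c. of_rat c * _"] cong: if_cong)
  then show ?thesis by metis
next
  case False
  have fin: "finite S" using indep unfolding Q_indep_def by simp
  obtain c where c: "of_rat (c z) * z + (\<Sum>x\<in>S. of_rat (c x) * x) = 0"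
    and nz: "\<exists>x\<in>insert z S. c x \<noteq> 0"
    using max[OF False] fin False unfolding Q_indep_def by auto
  have "c z \<noteq> 0"
  proof
    assume "c z = 0"
    then have "\<forall>x\<in>S. c x = 0" using c indep unfolding Q_indep_def by simp
    with nz \<open>c z = 0\<close> show False by auto
  qed
  from c have "of_rat (c z) * z = - (\<Sum>x\<in>S. of_rat (c x) * x)"
    by (simp add: eq_neg_iff_add_eq_0)
  with \<open>c z \<noteq> 0\<close> have "z = - (\<Sum>x\<in>S. of_rat (c x) * x) / of_rat (c z)"
    by (simp add: field_simps)
  also have "\<dots> = (\<Sum>x\<in>S. of_rat (- c x / c z) * x)"
    unfolding sum_divide_distrib sum_negf[symmetric] of_rat_divide of_rat_minus by simp
  finally show ?thesis by (rule exI[where x = "\<lambda>x. - c x / c z"])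
qed

lemma Q_span_of_field_degree_less:
  assumes "field_degree F < enat (Suc n)"
  obtains S where "finite S" "card S \<le> n" "S \<subseteq> F"
    "\<forall>z\<in>F. \<exists>c. z = (\<Sum>x\<in>S. of_rat (c x) * x)"
proof -
  have bound: "card S \<le> n" if "S \<subseteq> F" "Q_indep S" for S
  proof -
    have "enat (card S) \<le> field_degree F"
      unfolding field_degree_def using that by (intro Sup_upper) auto
    also note assms
    finally have "enat (card S) < enat (Suc n)" .
    then show ?thesis by simp
  qed
  define N where "N = {card S | S. S \<subseteq> F \<and> Q_indep S}"
  have "N \<subseteq> {..n}" unfolding N_def using bound by blast
  then have "finite N" by (rule finite_subset) simp
  moreover have "0 \<in> N" unfolding N_def Q_indep_def by (intro CollectI exI[of _ "{}"]) auto
  ultimately have "Max N \<in> N" by (intro Max_in) auto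
  then obtain S where S: "S \<subseteq> F" "Q_indep S" "card S = Max N" unfolding N_def by auto
  have fin: "finite S" using S(2) unfolding Q_indep_def by simp
  have "\<not> Q_indep (insert z S)" if "z \<in> F" "z \<notin> S" for z
  proof
    assume "Q_indep (insert z S)"
    with that S(1) have "card (insert z S) \<in> N" unfolding N_def by blast
    with \<open>finite N\<close> have "card (insert z S) \<le> Max N" by simp
    with S(3) fin that(2) show False by simp
  qed
  then have "\<forall>z\<in>F. \<exists>c. z = (\<Sum>x\<in>S. of_rat (c x) * x)"
    using S(2) Q_span_of_maximal_Q_indep by blast
  with that fin bound[OF S(1,2)] S(1) show ?thesis by blast
qed

section \<open>Complex bilinear forms with given Gram matrix\<close>

definition bilin_form :: "('a::finite \<Rightarrow> 'a \<Rightarrow> 'c::comm_semiring_0) \<Rightarrow> ('a \<Rightarrow> 'c) \<Rightarrow> ('a \<Rightarrow> 'c) \<Rightarrow> 'c"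
  where "bilin_form E p q = (\<Sum>a\<in>UNIV. \<Sum>b\<in>UNIV. p a * E a b * q b)"

lemma bilin_form_add_left: "bilin_form E (\<lambda>a. p a + p' a) q = bilin_form E p q + bilin_form E p' q"
  unfolding bilin_form_def by (simp add: distrib_right sum.distrib)

lemma bilin_form_add_right: "bilin_form E p (\<lambda>b. q b + q' b) = bilin_form E p q + bilin_form E p q'"
  unfolding bilin_form_def by (simp add: distrib_left sum.distrib)

lemma bilin_form_scale_left: "bilin_form E (\<lambda>a. c * p a) q = c * bilin_form E p q"
  unfolding bilin_form_def by (simp add: sum_distrib_left mult.assoc)

lemma bilin_form_scale_right: "bilin_form E p (\<lambda>b. c * q b) = c * bilin_form E p q"
  unfolding bilin_form_def by (simp add: sum_distrib_left mult_ac)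

lemma bilin_form_scale_form: "bilin_form (\<lambda>a b. c * E a b) p q = c * bilin_form E p q"
  unfolding bilin_form_def by (simp add: sum_distrib_left mult_ac)

lemma bilin_form_sum_left:
  "bilin_form E (\<lambda>a. \<Sum>k\<in>K. f k a) q = (\<Sum>k\<in>K. bilin_form E (f k) q)"
  unfolding bilin_form_def sum_distrib_right
  by (subst sum.swap, subst (2) sum.swap) (rule refl)

lemma bilin_form_sum_right:
  "bilin_form E p (\<lambda>b. \<Sum>l\<in>L. g l b) = (\<Sum>l\<in>L. bilin_form E p (g l))"
  unfolding bilin_form_def sum_distrib_left
  by (subst sum.swap, subst (2) sum.swap) (rule refl)

lemma bilin_form_cnj: "bilin_form E (\<lambda>a. cnj (p a)) (\<lambda>b. cnj (q b)) = cnj (bilin_form (\<lambda>a b. cnj (E a b)) p q)"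
  unfolding bilin_form_def by (simp add: cnj_sum)

lemma bilin_form_indicator:
  "bilin_form E (\<lambda>a. if a = c then 1 else 0) (\<lambda>b. if b = d then 1 else 0) = (E c d :: 'c::comm_semiring_1)"
proof -
  have "bilin_form E (\<lambda>a. if a = c then 1 else 0) (\<lambda>b. if b = d then 1 else 0)
      = (\<Sum>a\<in>UNIV. if a = c then \<Sum>b\<in>UNIV. if b = d then E a b else 0 else 0)"
    unfolding bilin_form_def by (intro sum.cong) (auto simp flip: of_bool_def)
  then show ?thesis by simp
qed

lemma bilin_form_antisym:
  assumes "\<And>a b. E a b = - E b a"
  shows "bilin_form E p q = - bilin_form E q (p :: _ \<Rightarrow> 'c::comm_ring)"
proof -
  have "bilin_form E q p = (\<Sum>b\<in>UNIV. \<Sum>a\<in>UNIV. - (p b * E b a * q a))"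
    unfolding bilin_form_def
  proof (subst sum.swap, intro sum.cong refl)
    fix a b
    show "q a * E a b * p b = - (p b * E b a * q a)" using assms[of a b] by (simp add: mult_ac)
  qed
  then show ?thesis unfolding bilin_form_def by (simp add: sum_negf)
qed

section \<open>A criterion for membership in the Neron--Severi group\<close>

text \<open>The vectors \<open>w\<^sub>k\<close>, with coordinates indexed like the lattice generators \<^const>\<open>lattice_vec\<close>.\<close>

definition period_kernel_vec :: "complex^'g^'g \<Rightarrow> 'g \<Rightarrow> ('g + 'g) \<Rightarrow> complex" where
  "period_kernel_vec \<tau> k a =
     (case a of Inl k' \<Rightarrow> if k' = k then 1 else 0 | Inr k' \<Rightarrow> - \<tau>$k'$k)"

text \<open>
  With \<open>Yi = (Im \<tau>)\<^sup>-\<^sup>1\<close>, the vector \<open>p(v) = kernel_part \<tau> Yi v\<close> lies in the span of the \<open>w\<^sub>k\<close>,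
  satisfies \<open>p(\<i> v) = -\<i> p(v)\<close>, and \<open>2 Re p(v)\<close> is the vector of real coordinates of \<open>v\<close> in
  the lattice basis. Hence \<open>NS_witness\<close> is the real-bilinear extension of \<open>E\<close> as soon as \<open>E\<close>
  vanishes on the span of the \<open>w\<^sub>k\<close>, and it is invariant under multiplication by \<open>\<i>\<close>.
\<close>

definition kernel_coeff :: "real^'g^'g \<Rightarrow> complex^'g \<Rightarrow> 'g \<Rightarrow> complex" where
  "kernel_coeff Yi v k = (\<i> / 2) * (\<Sum>l\<in>UNIV. of_real (Yi$k$l) * cnj (v$l))"

definition kernel_part :: "complex^'g^'g \<Rightarrow> real^'g^'g \<Rightarrow> complex^'g \<Rightarrow> ('g + 'g) \<Rightarrow> complex" where
  "kernel_part \<tau> Yi v a = (\<Sum>k\<in>UNIV. kernel_coeff Yi v k * period_kernel_vec \<tau> k a)"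

definition NS_witness ::
    "complex^'g^'g \<Rightarrow> real^'g^'g \<Rightarrow> (('g + 'g) \<Rightarrow> ('g + 'g) \<Rightarrow> int) \<Rightarrow> complex^'g \<Rightarrow> complex^'g \<Rightarrow> real"
  where "NS_witness \<tau> Yi E v w =
     2 * Re (bilin_form (\<lambda>a b. of_int (E a b)) (kernel_part \<tau> Yi v) (\<lambda>a. cnj (kernel_part \<tau> Yi w a)))"

lemma kernel_coeff_add: "kernel_coeff Yi (v + v') k = kernel_coeff Yi v k + kernel_coeff Yi v' k"
  by (simp add: kernel_coeff_def sum.distrib distrib_left)

lemma kernel_coeff_scaleR: "kernel_coeff Yi (r *\<^sub>R v) k = of_real r * kernel_coeff Yi v k"
  unfolding kernel_coeff_def vector_scaleR_component
  by (simp add: sum_distrib_left scaleR_conv_of_real mult_ac)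

lemma kernel_coeff_mult_i: "kernel_coeff Yi (\<chi> k. \<i> * v$k) k = - \<i> * kernel_coeff Yi v k"
  by (simp add: kernel_coeff_def sum_distrib_left mult_ac)

lemma kernel_part_add: "kernel_part \<tau> Yi (v + v') = (\<lambda>a. kernel_part \<tau> Yi v a + kernel_part \<tau> Yi v' a)"
  by (intro ext) (simp add: kernel_part_def kernel_coeff_add sum.distrib distrib_right)

lemma kernel_part_scaleR: "kernel_part \<tau> Yi (r *\<^sub>R v) = (\<lambda>a. of_real r * kernel_part \<tau> Yi v a)"
  by (intro ext) (simp add: kernel_part_def kernel_coeff_scaleR sum_distrib_left mult_ac)

lemma kernel_part_mult_i: "kernel_part \<tau> Yi (\<chi> k. \<i> * v$k) = (\<lambda>a. - \<i> * kernel_part \<tau> Yi v a)"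
  by (intro ext) (simp add: kernel_part_def kernel_coeff_mult_i sum_distrib_left mult_ac)

lemma real_bilinear_NS_witness: "real_bilinear (NS_witness \<tau> Yi E)"
  unfolding real_bilinear_def NS_witness_def
  by (auto intro!: linearI simp: kernel_part_add kernel_part_scaleR
      bilin_form_add_left bilin_form_add_right bilin_form_scale_left bilin_form_scale_right)

lemma NS_witness_mult_i: "NS_witness \<tau> Yi E (\<chi> k. \<i> * v$k) (\<chi> k. \<i> * w$k) = NS_witness \<tau> Yi E v w"
proof -
  have cnj: "(\<lambda>a. cnj (kernel_part \<tau> Yi (\<chi> k. \<i> * w$k) a)) = (\<lambda>a. \<i> * cnj (kernel_part \<tau> Yi w a))"
    by (simp add: kernel_part_mult_i)
  show ?thesis
    unfolding NS_witness_def cnj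
    unfolding kernel_part_mult_i bilin_form_scale_left bilin_form_scale_right by simp
qed

lemma Re_kernel_coeff: "2 * Re (kernel_coeff Yi v k) = (Yi *v (\<chi> l. Im (v$l)))$k"
  by (simp add: kernel_coeff_def matrix_vector_mult_def sum_negf)

lemma Im_kernel_coeff: "2 * Im (kernel_coeff Yi v k) = (Yi *v (\<chi> l. Re (v$l)))$k"
  by (simp add: kernel_coeff_def matrix_vector_mult_def)

lemma Re_kernel_part_Inl: "2 * Re (kernel_part \<tau> Yi v (Inl k)) = (Yi *v (\<chi> l. Im (v$l)))$k"
  by (simp add: kernel_part_def period_kernel_vec_def Re_kernel_coeff[symmetric] if_distrib cong: if_cong)

lemma Re_kernel_part_Inr:
  assumes "(\<chi> i j. Im (\<tau>$i$j)) ** Yi = mat 1"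
  shows "2 * Re (kernel_part \<tau> Yi v (Inr k))
    = Re (v$k) - ((\<chi> i j. Re (\<tau>$i$j)) *v (Yi *v (\<chi> l. Im (v$l))))$k"
proof -
  have Re: "(\<chi> l. 2 * Re (kernel_coeff Yi v l)) = Yi *v (\<chi> l. Im (v$l))"
    and Im: "(\<chi> l. 2 * Im (kernel_coeff Yi v l)) = Yi *v (\<chi> l. Re (v$l))"
    by (simp_all add: vec_eq_iff Re_kernel_coeff Im_kernel_coeff)
  have "2 * Re (kernel_part \<tau> Yi v (Inr k))
      = ((\<chi> i j. Im (\<tau>$i$j)) *v (\<chi> l. 2 * Im (kernel_coeff Yi v l)))$k
        - ((\<chi> i j. Re (\<tau>$i$j)) *v (\<chi> l. 2 * Re (kernel_coeff Yi v l)))$k"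
    by (simp add: kernel_part_def period_kernel_vec_def matrix_vector_mult_def
        sum_subtractf sum_distrib_left mult_ac)
  also have "((\<chi> i j. Im (\<tau>$i$j)) *v (\<chi> l. 2 * Im (kernel_coeff Yi v l))) = (\<chi> l. Re (v$l))"
    unfolding Im by (simp add: matrix_vector_mul_assoc assms)
  finally show ?thesis unfolding Re by simp
qed

lemma Re_kernel_part_lattice_vec:
  assumes "(\<chi> i j. Im (\<tau>$i$j)) ** Yi = mat 1" "Yi ** (\<chi> i j. Im (\<tau>$i$j)) = mat 1"
  shows "2 * Re (kernel_part \<tau> Yi (lattice_vec \<tau> c) a) = (if a = c then 1 else 0)"
proof (cases c)
  case (Inl j)
  have v: "lattice_vec \<tau> c = (\<chi> l. \<tau>$l$j)" by (simp add: Inl lattice_vec_def)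
  have column: "(\<chi> i j. f (\<tau>$i$j)) *v axis j 1 = (\<chi> l. f (\<tau>$l$j))" for f :: "complex \<Rightarrow> real"
    by (simp add: matrix_vector_mult_basis column_def)
  have Im: "Yi *v (\<chi> l. Im (\<tau>$l$j)) = axis j 1"
    unfolding column[of Im, symmetric] by (simp add: matrix_vector_mul_assoc assms(2))
  show ?thesis
  proof (cases a)
    case (Inl k)
    then show ?thesis using Re_kernel_part_Inl[of \<tau> Yi "lattice_vec \<tau> c" k]
      unfolding v by (simp add: Im \<open>c = Inl j\<close> axis_def)
  next
    case (Inr k)
    then show ?thesis using Re_kernel_part_Inr[OF assms(1), of "lattice_vec \<tau> c" k]
      unfolding v by (simp add: Im column \<open>c = Inl j\<close>)
  qed
next
  case (Inr j)
  have v: "lattice_vec \<tau> c = (\<chi> l. if l = j then 1 else 0)" by (simp add: Inr lattice_vec_def)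
  have Im: "(\<chi> l. Im (lattice_vec \<tau> c $ l)) = 0" by (simp add: v vec_eq_iff)
  show ?thesis
  proof (cases a)
    case (Inl k)
    then show ?thesis using Re_kernel_part_Inl[of \<tau> Yi "lattice_vec \<tau> c" k]
      unfolding Im by (simp add: \<open>c = Inr j\<close>)
  next
    case (Inr k)
    then show ?thesis using Re_kernel_part_Inr[OF assms(1), of "lattice_vec \<tau> c" k]
      unfolding Im by (simp add: \<open>c = Inr j\<close> lattice_vec_def)
  qed
qed

lemma NS_witness_lattice_vec:
  assumes inv: "(\<chi> i j. Im (\<tau>$i$j)) ** Yi = mat 1" "Yi ** (\<chi> i j. Im (\<tau>$i$j)) = mat 1"
    and iso: "\<And>k l. bilin_form (\<lambda>a b. of_int (E a b)) (period_kernel_vec \<tau> k) (period_kernel_vec \<tau> l) = 0"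
  shows "NS_witness \<tau> Yi E (lattice_vec \<tau> c) (lattice_vec \<tau> d) = of_int (E c d)"
proof -
  let ?E = "\<lambda>a b. complex_of_int (E a b)"
  define p where "p = kernel_part \<tau> Yi (lattice_vec \<tau> c)"
  define q where "q = kernel_part \<tau> Yi (lattice_vec \<tau> d)"
  have indicator: "(\<lambda>a. kernel_part \<tau> Yi (lattice_vec \<tau> e) a + cnj (kernel_part \<tau> Yi (lattice_vec \<tau> e) a))
      = (\<lambda>a. if a = e then 1 else 0)" for e
    by (intro ext) (simp add: complex_add_cnj Re_kernel_part_lattice_vec[OF inv])
  have pq: "bilin_form ?E p q = 0"
    unfolding p_def q_def kernel_part_def bilin_form_sum_left bilin_form_sum_right
      bilin_form_scale_left bilin_form_scale_right iso by simp
  define X where "X = bilin_form ?E p (\<lambda>a. cnj (q a))"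
  have "of_int (E c d) = bilin_form ?E (\<lambda>a. p a + cnj (p a)) (\<lambda>b. q b + cnj (q b))"
    unfolding p_def q_def indicator bilin_form_indicator ..
  also have "\<dots> = X + cnj X"
    \<comment> \<open>the terms \<open>E(p, q)\<close> and \<open>E(p\<^sup>*, q\<^sup>*)\<close> vanish because \<open>p\<close> and \<open>q\<close> lie in the span of the \<open>w\<^sub>k\<close>\<close>
    unfolding bilin_form_add_left bilin_form_add_right X_def
    using bilin_form_cnj[of ?E p "\<lambda>a. cnj (q a)"] bilin_form_cnj[of ?E p q] pq by simp
  finally have "of_int (E c d) = complex_of_real (2 * Re X)"
    by (simp add: complex_add_cnj)
  then show ?thesis
    unfolding NS_witness_def X_def p_def q_def by (metis Re_complex_of_real of_real_of_int_eq)
qed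

lemma NS_memI:
  assumes "det (\<chi> i j. Im (\<tau>$i$j)) \<noteq> 0" "\<forall>a. E a a = 0" "\<forall>a b. E a b = - E b a"
    and "\<And>k l. bilin_form (\<lambda>a b. of_int (E a b)) (period_kernel_vec \<tau> k) (period_kernel_vec \<tau> l) = 0"
  shows "E \<in> NS \<tau>"
proof -
  obtain Yi where "(\<chi> i j. Im (\<tau>$i$j)) ** Yi = mat 1" "Yi ** (\<chi> i j. Im (\<tau>$i$j)) = mat 1"
    using assms(1) invertible_det_nz unfolding invertible_def by blast
  then show ?thesis
    unfolding NS_def using assms(2-) real_bilinear_NS_witness NS_witness_mult_i NS_witness_lattice_vec
    by blast
qed

lemma period_kernel_vec_mem:
  assumes "is_subfield K" "\<And>i j. \<tau>$i$j \<in> K"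
  shows "period_kernel_vec \<tau> k a \<in> K"
proof (cases a)
  case Inl
  then show ?thesis using assms(1) by (simp add: is_subfield_def period_kernel_vec_def)
next
  case (Inr k')
  have "0 - \<tau>$k'$k \<in> K" using assms unfolding is_subfield_def by blast
  then show ?thesis by (simp add: Inr period_kernel_vec_def)
qed

lemma card_le_picard_number:
  assumes "S \<subseteq> NS \<tau>" "Z_indep S"
  shows "enat (card S) \<le> picard_number \<tau>"
  unfolding picard_number_def using assms by (intro Sup_upper) blast

section \<open>Dimension counts over \<open>\<rat>\<close>\<close>

lemma dim_le_dim_inter_kernel:
  fixes S :: "('f::field^'n) set" and \<phi> :: "'f^'n \<Rightarrow> 'f"
  assumes S: "vec.subspace S" and add: "\<And>x y. \<phi> (x + y) = \<phi> x + \<phi> y"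
    and scale: "\<And>c x. \<phi> (c *s x) = c * \<phi> x"
  shows "vec.dim S \<le> vec.dim (S \<inter> {x. \<phi> x = 0}) + 1"
proof (cases "\<forall>x\<in>S. \<phi> x = 0")
  case True
  then have "S \<inter> {x. \<phi> x = 0} = S" by auto
  then show ?thesis by simp
next
  case False
  then obtain b where b: "b \<in> S" "\<phi> b \<noteq> 0" by auto
  define K where "K = S \<inter> {x. \<phi> x = 0}"
  have "x \<in> vec.span (insert b K)" if x: "x \<in> S" for x
  proof -
    define t where "t = \<phi> x / \<phi> b"
    have "\<phi> (x - t *s b) = 0"
      using add[of "x - t *s b" "t *s b"] scale[of t b] b(2) by (simp add: t_def)
    with S x b have "x - t *s b \<in> K"
      unfolding K_def by (simp add: vec.subspace_diff vec.subspace_scale)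
    then have "(x - t *s b) + t *s b \<in> vec.span (insert b K)"
      by (intro vec.span_add) (simp_all add: vec.span_base vec.span_scale)
    then show ?thesis by simp
  qed
  then have "vec.dim S \<le> vec.dim (insert b K)" by (intro vec.dim_mono) blast
  also have "\<dots> \<le> vec.dim K + 1" by (simp add: vec.dim_insert)
  finally show ?thesis unfolding K_def .
qed

lemma dim_le_dim_inter_kernels:
  fixes S :: "('f::field^'n) set" and \<phi> :: "'i \<Rightarrow> 'f^'n \<Rightarrow> 'f"
  assumes "finite I" and S: "vec.subspace S"
    and add: "\<And>i x y. \<phi> i (x + y) = \<phi> i x + \<phi> i y"
    and scale: "\<And>i c x. \<phi> i (c *s x) = c * \<phi> i x"
  shows "vec.dim S \<le> vec.dim (S \<inter> {x. \<forall>i\<in>I. \<phi> i x = 0}) + card I"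
  using \<open>finite I\<close>
proof (induction I rule: finite_induct)
  case empty
  then show ?case by simp
next
  case (insert j I)
  let ?T = "S \<inter> {x. \<forall>i\<in>I. \<phi> i x = 0}"
  have "vec.subspace {x. \<forall>i\<in>I. \<phi> i x = 0}"
    using add scale[of _ 0 0] unfolding vec.subspace_def by (auto simp: scale)
  with S have "vec.subspace ?T" by (rule vec.subspace_inter)
  then have "vec.dim ?T \<le> vec.dim (?T \<inter> {x. \<phi> j x = 0}) + 1"
    using add scale by (rule dim_le_dim_inter_kernel)
  moreover have "?T \<inter> {x. \<phi> j x = 0} = S \<inter> {x. \<forall>i\<in>insert j I. \<phi> i x = 0}" by auto
  ultimately show ?case using insert by simp
qed

lemma card_less_pairs:
  assumes "finite A" "inj_on f A"
  shows "2 * card {(a, b) \<in> A \<times> A. f a < (f b :: 'b::linorder)} = card A * (card A - 1)"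
proof -
  let ?L = "{(a, b) \<in> A \<times> A. f a < f b}" and ?R = "{(a, b) \<in> A \<times> A. f b < f a}"
  have eq: "A \<times> A = ?L \<union> ?R \<union> (\<lambda>a. (a, a)) ` A"
  proof (intro equalityI subsetI)
    fix p assume "p \<in> A \<times> A"
    then obtain a b where p: "p = (a, b)" "a \<in> A" "b \<in> A" by auto
    then consider "f a < f b" | "f b < f a" | "a = b"
      using assms(2) by (metis inj_onD linorder_neqE)
    then show "p \<in> ?L \<union> ?R \<union> (\<lambda>a. (a, a)) ` A" using p by cases auto
  qed auto
  have "card ?R = card ?L"
  proof -
    have "?R = prod.swap ` ?L" by (auto simp: image_iff)
    then show ?thesis by (simp add: card_image inj_on_def)
  qed
  have fin: "finite ?L" "finite ?R"
    using assms(1) by (auto intro: finite_subset[of _ "A \<times> A"])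
  have "card A * card A = card (?L \<union> ?R \<union> (\<lambda>a. (a, a)) ` A)"
    by (subst eq[symmetric]) (rule card_cartesian_product[symmetric])
  also have "\<dots> = card ?L + card ?R + card ((\<lambda>a. (a, a)) ` A)"
    using fin assms(1) by (subst card_Un_disjoint, auto)+
  finally have "card A * card A = 2 * card ?L + card A"
    using \<open>card ?R = card ?L\<close> by (simp add: card_image inj_on_def)
  then show ?thesis by (simp add: algebra_simps diff_mult_distrib2)
qed

lemma subspace_antisym_vecs: "vec.subspace {x :: 'f::field^('a::finite \<times> 'a). \<forall>a b. x$(a, b) = - x$(b, a)}"
  (is "vec.subspace ?S")
proof (unfold vec.subspace_def, intro conjI ballI allI)
  show "0 \<in> ?S" by simp
  fix x y :: "'f^('a \<times> 'a)" and c :: 'f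
  assume "x \<in> ?S" "y \<in> ?S"
  then have x: "x$(a, b) = - x$(b, a)" and y: "y$(a, b) = - y$(b, a)" for a b by blast+
  show "x + y \<in> ?S"
  proof (intro CollectI allI)
    fix a b show "(x + y)$(a, b) = - (x + y)$(b, a)" using x[of a b] y[of a b] by simp
  qed
next
  fix x :: "'f^('a \<times> 'a)" and c :: 'f
  assume "x \<in> ?S"
  then have x: "x$(a, b) = - x$(b, a)" for a b by blast
  show "c *s x \<in> ?S"
  proof (intro CollectI allI)
    fix a b show "(c *s x)$(a, b) = - (c *s x)$(b, a)" using x[of a b] by simp
  qed
qed

lemma dim_antisym_vecs:
  "CARD('a) * (CARD('a) - 1) \<le> 2 * vec.dim {x :: 'f::field^('a::finite \<times> 'a). \<forall>a b. x$(a, b) = - x$(b, a)}"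
proof -
  obtain f :: "'a \<Rightarrow> nat" where f: "inj f"
    using finite_imp_inj_to_nat_seg[of "UNIV :: 'a set"] by auto
  define P where "P = {(a, b) \<in> UNIV \<times> UNIV. f a < f b}"
  define U where "U = {x :: 'f^('a \<times> 'a). \<forall>i. i \<notin> P \<longrightarrow> x$i = 0}"
  define g where "g x = (\<chi> p. if f (fst p) < f (snd p) then x$p
      else if f (snd p) < f (fst p) then - x$(prod.swap p) else 0)"
    for x :: "'f^('a \<times> 'a)"
  have "Vector_Spaces.linear (*s) (*s) g"
    unfolding Vector_Spaces.linear_iff
  proof (intro conjI allI vec.vector_space_axioms)
    show "g (x + y) = g x + g y" for x y by (simp add: g_def vec_eq_iff)
    show "g (c *s x) = c *s g x" for c x by (simp add: g_def vec_eq_iff)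
  qed
  moreover have "inj_on g (vec.span U)"
  proof -
    have "vec.subspace U" unfolding U_def vec.subspace_def by auto
    moreover have restore: "x = (\<chi> i. if i \<in> P then g x $ i else 0)" if "x \<in> U" for x
      using that by (auto simp: vec_eq_iff U_def P_def g_def)
    have "inj_on g U"
    proof (rule inj_onI)
      fix x y assume "x \<in> U" "y \<in> U" "g x = g y"
      then show "x = y" using restore[of x] restore[of y] by metis
    qed
    ultimately show ?thesis by (simp add: vec.span_eq_iff[THEN iffD2])
  qed
  ultimately have "vec.dim (g ` U) = vec.dim U" by (rule vec.dim_image_eq)
  moreover have "g ` U \<subseteq> {x. \<forall>a b. x$(a, b) = - x$(b, a)}"
    using f by (auto simp: g_def dest: injD)
  then have "vec.dim (g ` U) \<le> vec.dim {x :: 'f^('a \<times> 'a). \<forall>a b. x$(a, b) = - x$(b, a)}"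
    using vec.span_superset by (intro vec.dim_mono) blast
  moreover have "2 * card P = CARD('a) * (CARD('a) - 1)"
    unfolding P_def using f by (intro card_less_pairs) (auto intro: inj_on_subset)
  ultimately show ?thesis unfolding U_def dim_substandard_cart by linarith
qed

text \<open>Rational forms on \<open>'a\<close> are encoded as vectors indexed by pairs, so that \<^const>\<open>vec.dim\<close> applies.\<close>

definition isotropic_forms :: "('k::finite \<Rightarrow> 'a::finite \<Rightarrow> complex) \<Rightarrow> (rat^('a \<times> 'a)) set" where
  "isotropic_forms w = {x. (\<forall>a b. x$(a, b) = - x$(b, a)) \<and>
     (\<forall>k l. bilin_form (\<lambda>a b. of_rat (x$(a, b))) (w k) (w l) = 0)}"

lemma bilin_form_of_rat_eq_sum:
  assumes "\<And>a b. w k a * w l b = (\<Sum>e\<in>Sb. of_rat (c a b e) * e)"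
  shows "bilin_form (\<lambda>a b. of_rat (x$(a, b))) (w k) (w l)
    = (\<Sum>e\<in>Sb. of_rat (\<Sum>a\<in>UNIV. \<Sum>b\<in>UNIV. c a b e * x$(a, b)) * e)"
proof -
  have "w k a * of_rat (x$(a, b)) * w l b = (\<Sum>e\<in>Sb. of_rat (c a b e * x$(a, b)) * e)" for a b
  proof -
    have "w k a * of_rat (x$(a, b)) * w l b = of_rat (x$(a, b)) * (w k a * w l b)"
      by (simp add: mult_ac)
    also have "\<dots> = (\<Sum>e\<in>Sb. of_rat (x$(a, b)) * (of_rat (c a b e) * e))"
      unfolding assms by (rule sum_distrib_left)
    finally show ?thesis by (simp add: of_rat_mult mult_ac)
  qed
  then have "bilin_form (\<lambda>a b. of_rat (x$(a, b))) (w k) (w l)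
      = (\<Sum>a\<in>UNIV. \<Sum>b\<in>UNIV. \<Sum>e\<in>Sb. of_rat (c a b e * x$(a, b)) * e)"
    unfolding bilin_form_def by simp
  also have "\<dots> = (\<Sum>e\<in>Sb. \<Sum>a\<in>UNIV. \<Sum>b\<in>UNIV. of_rat (c a b e * x$(a, b)) * e)"
    by (subst sum.swap, subst (2) sum.swap) (rule refl)
  also have "\<dots> = (\<Sum>e\<in>Sb. of_rat (\<Sum>a\<in>UNIV. \<Sum>b\<in>UNIV. c a b e * x$(a, b)) * e)"
    by (simp add: of_rat_sum sum_distrib_right)
  finally show ?thesis .
qed

lemma isotropic_formsI:
  assumes antisym: "\<forall>a b. x$(a, b) = - x$(b, a)" and "inj (h :: 'k::finite \<Rightarrow> nat)"
    and less: "\<And>k l. h k < h l \<Longrightarrow> bilin_form (\<lambda>a b. of_rat (x$(a, b))) (w k) (w l) = 0"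
  shows "x \<in> isotropic_forms w"
proof -
  let ?B = "\<lambda>k l. bilin_form (\<lambda>a b. of_rat (x$(a, b))) (w k) (w l)"
  have B_antisym: "?B k l = - ?B l k" for k l
    using antisym by (intro bilin_form_antisym) (metis of_rat_minus)
  have "?B k l = 0" for k l
  proof -
    consider "h k < h l" | "h l < h k" | "k = l"
      using \<open>inj h\<close> by (metis injD linorder_neqE_nat)
    then show ?thesis
      using less[of k l] less[of l k] B_antisym[of k l] B_antisym[of k k] by cases auto
  qed
  with antisym show ?thesis unfolding isotropic_forms_def by blast
qed

text \<open>
  For \<open>k < l\<close> in some ordering, the condition on the pair \<open>(w\<^sub>k, w\<^sub>l)\<close> takes values in the
  \<open>\<rat>\<close>-span of \<open>Sb\<close>, so it is implied by \<open>card Sb\<close> rational linear equations; the pairs with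
  \<open>k \<ge> l\<close> then follow by antisymmetry.
\<close>

lemma dim_isotropic_forms:
  fixes w :: "'k::finite \<Rightarrow> 'a::finite \<Rightarrow> complex"
  assumes "finite Sb" and span: "\<And>k l a b. \<exists>c. w k a * w l b = (\<Sum>e\<in>Sb. of_rat (c e) * e)"
  shows "CARD('a) * (CARD('a) - 1) \<le> 2 * vec.dim (isotropic_forms w) + card Sb * (CARD('k) * (CARD('k) - 1))"
proof -
  define c where "c k l a b = (SOME c. w k a * w l b = (\<Sum>e\<in>Sb. of_rat (c e) * e))" for k l a b
  have c: "w k a * w l b = (\<Sum>e\<in>Sb. of_rat (c k l a b e) * e)" for k l a b
    unfolding c_def using span by (rule someI_ex)
  obtain h :: "'k \<Rightarrow> nat" where h: "inj h"
    using finite_imp_inj_to_nat_seg[of "UNIV :: 'k set"] by auto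
  define P where "P = {(k, l) \<in> UNIV \<times> UNIV. h k < h l}"
  define \<phi> where "\<phi> i x = (\<Sum>a\<in>UNIV. \<Sum>b\<in>UNIV. c (fst (fst i)) (snd (fst i)) a b (snd i) * x$(a, b))"
    for i :: "('k \<times> 'k) \<times> complex" and x :: "rat^('a \<times> 'a)"
  define A where "A = {x :: rat^('a \<times> 'a). \<forall>a b. x$(a, b) = - x$(b, a)}"
  define K where "K = A \<inter> {x. \<forall>i\<in>P \<times> Sb. \<phi> i x = 0}"
  have "vec.subspace A" unfolding A_def by (rule subspace_antisym_vecs)
  moreover have "\<phi> i (x + y) = \<phi> i x + \<phi> i y" for i x y
    by (simp add: \<phi>_def distrib_left sum.distrib)
  moreover have "\<phi> i (r *s x) = r * \<phi> i x" for i x r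
    by (simp add: \<phi>_def sum_distrib_left mult_ac)
  ultimately have dim_A: "vec.dim A \<le> vec.dim K + card (P \<times> Sb)"
    unfolding K_def using \<open>finite Sb\<close> by (intro dim_le_dim_inter_kernels) auto
  have "K \<subseteq> isotropic_forms w"
  proof
    fix x assume "x \<in> K"
    then have x: "\<forall>a b. x$(a, b) = - x$(b, a)" "\<forall>i\<in>P \<times> Sb. \<phi> i x = 0"
      unfolding K_def A_def by blast+
    show "x \<in> isotropic_forms w"
    proof (rule isotropic_formsI[OF x(1) h])
      fix k l assume "h k < h l"
      then have "\<phi> ((k, l), e) x = 0" if "e \<in> Sb" for e
        using x(2) that unfolding P_def by blast
      then show "bilin_form (\<lambda>a b. of_rat (x$(a, b))) (w k) (w l) = 0"
        unfolding bilin_form_of_rat_eq_sum[where c = "c k l", OF c] by (simp add: \<phi>_def)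
    qed
  qed
  then have dim_K: "vec.dim K \<le> vec.dim (isotropic_forms w)"
    using vec.span_superset by (intro vec.dim_mono) blast
  have "2 * card P = CARD('k) * (CARD('k) - 1)"
    unfolding P_def using h by (intro card_less_pairs) (auto intro: inj_on_subset)
  then have card: "2 * card (P \<times> Sb) = card Sb * (CARD('k) * (CARD('k) - 1))"
    by (metis card_cartesian_product mult.assoc mult.commute)
  have "CARD('a) * (CARD('a) - 1) \<le> 2 * vec.dim A"
    unfolding A_def by (rule dim_antisym_vecs)
  also have "\<dots> \<le> 2 * vec.dim K + 2 * card (P \<times> Sb)"
    using dim_A by simp
  also have "\<dots> \<le> 2 * vec.dim (isotropic_forms w) + card Sb * (CARD('k) * (CARD('k) - 1))"
    unfolding card using dim_K by simp
  finally show ?thesis .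
qed

section \<open>Integral forms\<close>

lemma of_int_mult_rat_in_Ints:
  assumes "snd (quotient_of r) dvd D"
  shows "of_int D * r \<in> \<int>"
proof -
  obtain n d where q: "quotient_of r = (n, d)" by (cases "quotient_of r")
  with assms obtain m where "D = d * m" by (auto elim: dvdE)
  moreover have "d > 0" "r = of_int n / of_int d"
    using quotient_of_denom_pos[OF q] quotient_of_div[OF q] by simp_all
  ultimately have "of_int D * r = of_int (m * n)" by (simp add: field_simps)
  then show ?thesis by simp
qed

lemma common_denominator:
  fixes B :: "(rat^'n) set"
  assumes "finite B"
  obtains D :: int where "D > 0" "\<And>x i. x \<in> B \<Longrightarrow> of_int D * x$i \<in> \<int>"
proof
  let ?D = "\<Prod>x\<in>B. \<Prod>i\<in>UNIV. snd (quotient_of (x$i))"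
  show "?D > 0" by (intro prod_pos) (simp add: quotient_of_denom_pos')
  fix x i assume "x \<in> B"
  have "snd (quotient_of (x$i)) dvd (\<Prod>i\<in>UNIV. snd (quotient_of (x$i)))" by (rule dvd_prodI) auto
  also have "\<dots> dvd ?D" using assms \<open>x \<in> B\<close> by (rule dvd_prodI)
  finally show "of_int ?D * x$i \<in> \<int>" by (rule of_int_mult_rat_in_Ints)
qed

lemma Z_indep_integral_multiples:
  fixes B :: "(rat^('a::finite \<times> 'a)) set"
  assumes "finite B" "vec.independent B"
  obtains D :: int and F where "D > 0" "inj_on F B" "Z_indep (F ` B)"
    "\<And>x a b. x \<in> B \<Longrightarrow> of_int (F x a b) = of_int D * x$(a, b)"
proof -
  obtain D :: int where D: "D > 0" "\<And>x i. x \<in> B \<Longrightarrow> of_int D * x$i \<in> \<int>"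
    using common_denominator[OF assms(1)] by blast
  define F where "F x a b = \<lfloor>of_int D * x$(a, b)\<rfloor>" for x :: "rat^('a \<times> 'a)" and a b
  have F: "of_int (F x a b) = of_int D * x$(a, b)" if "x \<in> B" for x a b
    using D(2)[OF that, of "(a, b)"] unfolding F_def by (auto elim: Ints_cases)
  have "inj_on F B"
  proof (rule inj_onI)
    fix x y assume "x \<in> B" "y \<in> B" "F x = F y"
    then have "of_int D * x$(a, b) = of_int D * y$(a, b)" for a b
      using F by metis
    with D(1) show "x = y" by (simp add: vec_eq_iff)
  qed
  moreover have "Z_indep (F ` B)"
    unfolding Z_indep_def
  proof (intro conjI allI impI)
    show "finite (F ` B)" using assms(1) by simp
    fix c :: "('a \<Rightarrow> 'a \<Rightarrow> int) \<Rightarrow> int"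
    assume "\<forall>a b. (\<Sum>E\<in>F ` B. c E * E a b) = 0"
    then have c: "(\<Sum>x\<in>B. c (F x) * F x a b) = 0" for a b
      by (simp add: sum.reindex[OF \<open>inj_on F B\<close>])
    define u where "u x = (of_int (c (F x)) * of_int D :: rat)" for x :: "rat^('a \<times> 'a)"
    have "(\<Sum>x\<in>B. u x *s x) = 0"
    proof (rule vec_eq_iff[THEN iffD2], rule allI)
      fix i :: "'a \<times> 'a"
      obtain a b where i: "i = (a, b)" by (cases i)
      have "(\<Sum>x\<in>B. u x *s x)$i = (\<Sum>x\<in>B. of_int (c (F x) * F x a b))"
        unfolding sum_component i by (intro sum.cong refl) (simp add: u_def F mult.assoc)
      also have "\<dots> = 0" unfolding of_int_sum[symmetric] c by simp
      finally show "(\<Sum>x\<in>B. u x *s x)$i = 0$i" by simp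
    qed
    then have "u x = 0" if "x \<in> B" for x
      using assms vec.dependent_finite that by blast
    with D(1) show "\<forall>E\<in>F ` B. c E = 0" by (simp add: u_def)
  qed
  ultimately show ?thesis using that D(1) F by blast
qed

lemma exists_isotropic_integral_forms:
  fixes w :: "'k::finite \<Rightarrow> 'a::finite \<Rightarrow> complex"
  assumes "finite Sb" "\<And>k l a b. \<exists>c. w k a * w l b = (\<Sum>e\<in>Sb. of_rat (c e) * e)"
  obtains S where "Z_indep S"
    "CARD('a) * (CARD('a) - 1) \<le> 2 * card S + card Sb * (CARD('k) * (CARD('k) - 1))"
    "\<And>E a. E \<in> S \<Longrightarrow> E a a = 0" "\<And>E a b. E \<in> S \<Longrightarrow> E a b = - E b a"
    "\<And>E k l. E \<in> S \<Longrightarrow> bilin_form (\<lambda>a b. of_int (E a b)) (w k) (w l) = 0"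
proof -
  obtain B where B: "B \<subseteq> isotropic_forms w" "vec.independent B" "card B = vec.dim (isotropic_forms w)"
    using vec.basis_exists[of "isotropic_forms w"] by metis
  then have "finite B" by (simp add: vec.finiteI_independent)
  then obtain D :: int and F where D: "D > 0" and "inj_on F B" "Z_indep (F ` B)"
    and F: "\<And>x a b. x \<in> B \<Longrightarrow> of_int (F x a b) = of_int D * x$(a, b)"
    using Z_indep_integral_multiples B(2) by metis
  have antisym: "F x a b = - F x b a" if "x \<in> B" for x a b
  proof -
    have "x$(a, b) = - x$(b, a)" using B(1) that unfolding isotropic_forms_def by blast
    then have "(of_int (F x a b) :: rat) = of_int (- F x b a)" using F[OF that] by simp
    then show ?thesis by (simp only: of_int_eq_iff)
  qed
  have diag: "F x a a = 0" if "x \<in> B" for x a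
    using antisym[OF that, of a a] by simp
  have isotropic: "bilin_form (\<lambda>a b. of_int (F x a b)) (w k) (w l) = 0" if "x \<in> B" for x k l
  proof -
    have "(\<lambda>a b. of_int (F x a b) :: complex) = (\<lambda>a b. of_int D * of_rat (x$(a, b)))"
      using F[OF that] by (intro ext) (metis of_rat_mult of_rat_of_int_eq)
    moreover have "bilin_form (\<lambda>a b. of_rat (x$(a, b))) (w k) (w l) = 0"
      using B(1) that unfolding isotropic_forms_def by blast
    ultimately show ?thesis by (simp add: bilin_form_scale_form)
  qed
  have "card (F ` B) = vec.dim (isotropic_forms w)"
    using B(3) \<open>inj_on F B\<close> by (simp add: card_image)
  show ?thesis
  proof (rule that[of "F ` B"])
    show "CARD('a) * (CARD('a) - 1) \<le> 2 * card (F ` B) + card Sb * (CARD('k) * (CARD('k) - 1))"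
      unfolding \<open>card (F ` B) = _\<close> by (rule dim_isotropic_forms[OF assms])
  qed (use \<open>Z_indep (F ` B)\<close> antisym diag isotropic in blast)+
qed

lemma le_of_pair_count_bound:
  fixes g s n :: nat
  assumes "(2 * g) * (2 * g - 1) \<le> 2 * s + n * (g * (g - 1))" "n \<le> 4"
  shows "g \<le> s"
proof -
  have "n * (g * (g - 1)) \<le> 4 * (g * (g - 1))" using assms(2) by (rule mult_right_mono) simp
  moreover have "(2 * g) * (2 * g - 1) = 4 * (g * (g - 1)) + 2 * g"
    by (cases g) (simp_all add: algebra_simps)
  ultimately show ?thesis using assms(1) by linarith
qed

lemma period_kernel_products_in_Q_span:
  assumes "field_degree (gen_field {\<tau>$i$j | i j. True}) < enat (Suc n)"
  obtains Sb where "finite Sb" "card Sb \<le> n"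
    "\<And>k l a b. \<exists>c. period_kernel_vec \<tau> k a * period_kernel_vec \<tau> l b = (\<Sum>e\<in>Sb. of_rat (c e) * e)"
proof -
  define K where "K = gen_field {\<tau>$i$j | i j. True}"
  obtain Sb where Sb: "finite Sb" "card Sb \<le> n"
    and span: "\<forall>z\<in>K. \<exists>c. z = (\<Sum>x\<in>Sb. of_rat (c x) * x)"
    using assms unfolding K_def by (rule Q_span_of_field_degree_less)
  have "is_subfield K" unfolding K_def by (rule is_subfield_gen_field)
  moreover have "\<tau>$i$j \<in> K" for i j
    unfolding K_def by (rule subsetD[OF gen_field_subset]) blast
  ultimately have "period_kernel_vec \<tau> k a * period_kernel_vec \<tau> l b \<in> K" for k l a b
    by (intro is_subfield_mult period_kernel_vec_mem)
  with span Sb that show ?thesis by blast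
qed

lemma exists_NS_subset_rank_bound:
  fixes \<tau> :: "complex^'g^'g"
  assumes "det (\<chi> i j. Im (\<tau>$i$j)) \<noteq> 0" "finite Sb"
    and "\<And>k l a b. \<exists>c. period_kernel_vec \<tau> k a * period_kernel_vec \<tau> l b = (\<Sum>e\<in>Sb. of_rat (c e) * e)"
  obtains S where "S \<subseteq> NS \<tau>" "Z_indep S"
    "CARD('g + 'g) * (CARD('g + 'g) - 1) \<le> 2 * card S + card Sb * (CARD('g) * (CARD('g) - 1))"
proof -
  obtain S where S: "Z_indep S"
    "CARD('g + 'g) * (CARD('g + 'g) - 1) \<le> 2 * card S + card Sb * (CARD('g) * (CARD('g) - 1))"
    and alt: "\<And>E a. E \<in> S \<Longrightarrow> E a a = 0" "\<And>E a b. E \<in> S \<Longrightarrow> E a b = - E b a"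
    and iso: "\<And>E k l. E \<in> S \<Longrightarrow>
       bilin_form (\<lambda>a b. of_int (E a b)) (period_kernel_vec \<tau> k) (period_kernel_vec \<tau> l) = 0"
    using exists_isotropic_integral_forms[where w = "period_kernel_vec \<tau>", OF assms(2,3)] by blast
  have "S \<subseteq> NS \<tau>"
    using alt iso by (intro subsetI NS_memI[OF assms(1)] allI) blast+
  with S that show ?thesis by blast
qed

theorem mainTheorem9:
  fixes \<tau> :: "complex^'g^'g"
  assumes "det (\<chi> i j. Im (\<tau>$i$j)) \<noteq> 0"
    and "picard_number \<tau> < enat CARD('g)"
  shows "field_degree (gen_field {\<tau>$i$j | i j. True}) \<ge> 5"
proof (rule ccontr)
  assume "\<not> field_degree (gen_field {\<tau>$i$j | i j. True}) \<ge> 5"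
  then have "field_degree (gen_field {\<tau>$i$j | i j. True}) < enat (Suc 4)"
    by (simp add: not_le numeral_eq_enat)
  then obtain Sb where Sb: "finite Sb" "card Sb \<le> 4"
    and span: "\<And>k l a b. \<exists>c. period_kernel_vec \<tau> k a * period_kernel_vec \<tau> l b = (\<Sum>e\<in>Sb. of_rat (c e) * e)"
    using period_kernel_products_in_Q_span by blast
  obtain S where "S \<subseteq> NS \<tau>" "Z_indep S"
    and bound: "CARD('g + 'g) * (CARD('g + 'g) - 1) \<le> 2 * card S + card Sb * (CARD('g) * (CARD('g) - 1))"
    using exists_NS_subset_rank_bound[OF assms(1) Sb(1) span] by blast
  have "CARD('g + 'g) = 2 * CARD('g)" by (simp add: card_UNIV_sum)
  with bound have "CARD('g) \<le> card S"
    using le_of_pair_count_bound[OF _ Sb(2)] by metis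
  then have "enat CARD('g) \<le> enat (card S)" by simp
  also have "\<dots> \<le> picard_number \<tau>" by (rule card_le_picard_number) fact+
  finally show False using assms(2) by simp
qed

end
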